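(* Let $c>0$, $\lambda>0$, and for $t>0$, $\mathbf{y}\in\mathbb{R}^3$ with $\|\mathbf{y}\|<ct$ let $$p(\mathbf{y},t)=\frac{\lambda}{2c}\frac{1}{\pi(e^{\lambda t}-1)}\sum_{k=0}^{\infty}\left(\frac{\lambda}{2c}\right)^{k+1}\frac{\left(\sqrt{c^2t^2-\|\mathbf{y}\|^2}\right)^{k-1}}{\Gamma(\frac{k+1}{2})\Gamma(\frac{k+3}{2})},$$ the density of the absolutely continuous component of the law of the three-dimensional random flight $\mathbf{Y}_3(t)$ described in the context. Then $u=p$ satisfies, in $\{(\mathbf{y},t):t>0,\|\mathbf{y}\|<ct\}$, the non-homogeneous telegraph-type equation with variable coefficients $$\left(\frac{\partial^2}{\partial t^2}+c_1(t)\frac{\partial}{\partial t}-c^2\Delta\right)u(\mathbf{y},t)=c_2(t)u(\mathbf{y},t)+c_3(\mathbf{y},t),$$ where $\Delta=\sum_{j=1}^3\partial^2/\partial y_j^2$ and $$c_1(t)=\frac{2\lambda e^{\lambda t}}{e^{\lambda t}-1},\qquad c_2(t)=-\frac{\lambda^2}{e^{\lambda t}-1},\qquad c_3(\mathbf{y},t)=\frac{\lambda^2}{\sqrt{\pi^3}(e^{\lambda t}-1)}\frac{(c^2t^2-\|\mathbf{y}\|^2)^{-3/2}}{\Gamma(-\frac12)}.$$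
   Context: The random flight $\mathbf{Y}_3(t)$ in $\mathbb{R}^3$: a particle starts at the origin, moves at constant speed $c$, with independent uniformly distributed directions on $S^2$ for successive segments; given $\mathcal{N}_3(t)=k$ changes of direction in $(0,t)$, the segment durations $(\tau_1,\dots,\tau_{k+1})$, $\sum\tau_j=t$, have the rescaled Dirichlet law with all parameters $1/2$, and $P\{\mathcal{N}_3(t)=k\}=\frac{1}{E_{1,2}(\lambda t)}\frac{(\lambda t)^k}{(k+1)!}=\frac{(\lambda t)^{k+1}}{(e^{\lambda t}-1)(k+1)!}$. The function $p$ above is the density of the absolutely continuous part of the law of $\mathbf{Y}_3(t)$. *)

theory Defs
  imports "HOL-Analysis.Analysis"
begin

definition flight_density :: "real \<Rightarrow> real \<Rightarrow> real ^ 3 \<Rightarrow> real \<Rightarrow> real" where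
  "flight_density c lam y t =
     lam / (2 * c) * (1 / (pi * (exp (lam * t) - 1))) *
     (\<Sum>k. (lam / (2 * c)) ^ (k + 1) *
            (sqrt (c\<^sup>2 * t\<^sup>2 - (norm y)\<^sup>2)) powr (real k - 1) /
            (Gamma ((real k + 1) / 2) * Gamma ((real k + 3) / 2)))"

definition dt :: "(real ^ 3 \<Rightarrow> real \<Rightarrow> real) \<Rightarrow> real ^ 3 \<Rightarrow> real \<Rightarrow> real" where
  "dt u y t = deriv (\<lambda>s. u y s) t"

definition dy :: "3 \<Rightarrow> (real ^ 3 \<Rightarrow> real \<Rightarrow> real) \<Rightarrow> real ^ 3 \<Rightarrow> real \<Rightarrow> real" where
  "dy j u y t = deriv (\<lambda>s. u (y + s *\<^sub>R axis j 1) t) 0"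

definition laplacian :: "(real ^ 3 \<Rightarrow> real \<Rightarrow> real) \<Rightarrow> real ^ 3 \<Rightarrow> real \<Rightarrow> real" where
  "laplacian u y t = (\<Sum>j\<in>UNIV. dy j (dy j u) y t)"

definition coef1 :: "real \<Rightarrow> real \<Rightarrow> real" where
  "coef1 lam t = 2 * lam * exp (lam * t) / (exp (lam * t) - 1)"

definition coef2 :: "real \<Rightarrow> real \<Rightarrow> real" where
  "coef2 lam t = - (lam\<^sup>2 / (exp (lam * t) - 1))"

definition coef3 :: "real \<Rightarrow> real \<Rightarrow> real ^ 3 \<Rightarrow> real \<Rightarrow> real" where
  "coef3 c lam y t = lam\<^sup>2 / (sqrt (pi ^ 3) * (exp (lam * t) - 1)) *
      ((c\<^sup>2 * t\<^sup>2 - (norm y)\<^sup>2) powr (-3/2) / Gamma (-1/2))"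

end

theory Submission
  imports Defs
begin

text \<open>
  Write a = lam/(2c) and Q = c^2 t^2 - |y|^2. On the cone the density factors as g(t) F(Q)
  with g(t) = a / (pi (e^(lam t) - 1)) and F(q) = G(sqrt q) / sqrt q, where
  G(s) = sum_k b_k s^k with b_k = a^(k+1) / (Gamma((k+1)/2) Gamma((k+3)/2)) is entire.
  For any function of this separable form the telegraph operator equals
  (g'' + c1 g') F + 2 c^2 t (2 g' + c1 g) F' + 4 c^2 g (Q F'' + 2 F').
  The factor 1/(e^(lam t) - 1) satisfies 2 g' + c1 g = 0 and g'' + c1 g' = (c2 - lam^2) g.
  The recursion (k+1)(k+3) b_(k+2) = 4 a^2 b_k makes G solve the inhomogeneous modified Bessel
  equation s^2 G'' + s G' - (1 + 4 a^2 s^2) G = -2a/pi, which under q = s^2 becomes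
  Q F'' + 2 F' - a^2 F = -(a/(2 pi)) Q^(-3/2). Since 4 c^2 a^2 = lam^2, the F-terms add up
  to c2 p and the source term is c3.
\<close>

section \<open>The flight series\<close>

definition gamma_half_product :: "nat \<Rightarrow> real" where
  "gamma_half_product k = Gamma ((real k + 1) / 2) * Gamma ((real k + 3) / 2)"

definition flight_coeff :: "real \<Rightarrow> nat \<Rightarrow> real" where
  "flight_coeff a k = a ^ (k + 1) / gamma_half_product k"

lemma gamma_half_product_pos: "gamma_half_product k > 0"
  unfolding gamma_half_product_def by (intro mult_pos_pos Gamma_real_pos) auto

lemma Gamma_real_plus1: "x > 0 \<Longrightarrow> Gamma (x + 1) = x * Gamma (x :: real)"
  by (rule Gamma_plus1) (auto elim!: nonpos_Ints_cases)

lemma gamma_half_product_add2: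
  "gamma_half_product (k + 2) = (real k + 1) * (real k + 3) / 4 * gamma_half_product k"
proof -
  have "gamma_half_product (k + 2) = Gamma ((real k + 1) / 2 + 1) * Gamma ((real k + 3) / 2 + 1)"
    unfolding gamma_half_product_def by (simp add: field_simps)
  also have "\<dots> = (real k + 1) * (real k + 3) / 4 * gamma_half_product k"
    unfolding gamma_half_product_def by (simp add: Gamma_real_plus1)
  finally show ?thesis .
qed

lemma gamma_half_product_0: "gamma_half_product 0 = pi / 2"
proof -
  have "Gamma (3 / 2 :: real) = Gamma (1 / 2 + 1)" by simp
  also have "\<dots> = sqrt pi / 2" by (subst Gamma_real_plus1) (auto simp: Gamma_one_half_real)
  finally have Gamma_three_halves: "Gamma (3 / 2 :: real) = sqrt pi / 2" .
  have "gamma_half_product 0 = Gamma (1 / 2) * Gamma (3 / 2)"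
    by (simp add: gamma_half_product_def)
  also have "\<dots> = sqrt pi * (sqrt pi / 2)"
    by (simp only: Gamma_three_halves Gamma_one_half_real)
  finally show ?thesis by simp
qed

lemma fact_le_gamma_half_product:
  defines "m \<equiv> min (gamma_half_product 0) (2 * gamma_half_product 1)"
  shows "m * fact k \<le> 2 ^ k * gamma_half_product k"
proof (induction k rule: nat_induct2)
  case (step k)
  have "m \<ge> 0" using gamma_half_product_pos by (simp add: m_def less_imp_le)
  have "m * fact (k + 2) = m * fact k * ((real k + 1) * (real k + 2))"
    by (simp add: algebra_simps)
  also have "\<dots> \<le> m * fact k * ((real k + 1) * (real k + 3))"
    using \<open>m \<ge> 0\<close> by (intro mult_left_mono) auto
  also have "\<dots> \<le> 2 ^ k * gamma_half_product k * ((real k + 1) * (real k + 3))"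
    using step by (intro mult_right_mono) auto
  also have "\<dots> = 2 ^ (k + 2) * gamma_half_product (k + 2)"
    unfolding gamma_half_product_add2 by (simp add: field_simps)
  finally show ?case .
qed (auto simp: m_def)

lemma summable_flight_coeff: "summable (\<lambda>n. flight_coeff a n * s ^ n)"
proof (rule summable_comparison_test)
  define m where "m = min (gamma_half_product 0) (2 * gamma_half_product 1)"
  have m: "m > 0" using gamma_half_product_pos by (simp add: m_def)
  show "summable (\<lambda>n. \<bar>a\<bar> / m * (inverse (fact n) * (2 * \<bar>a\<bar> * \<bar>s\<bar>) ^ n))"
    by (intro summable_mult summable_exp)
  show "\<exists>N. \<forall>n\<ge>N. norm (flight_coeff a n * s ^ n)
      \<le> \<bar>a\<bar> / m * (inverse (fact n) * (2 * \<bar>a\<bar> * \<bar>s\<bar>) ^ n)"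
  proof (intro exI allI impI)
    fix n :: nat
    have bound: "m * fact n / 2 ^ n \<le> gamma_half_product n"
      using fact_le_gamma_half_product[of n] by (simp add: m_def field_simps)
    have "norm (flight_coeff a n * s ^ n) = \<bar>a\<bar> ^ (n + 1) * \<bar>s\<bar> ^ n / gamma_half_product n"
      using gamma_half_product_pos[of n] by (simp add: flight_coeff_def abs_mult power_abs)
    also have "\<dots> \<le> \<bar>a\<bar> ^ (n + 1) * \<bar>s\<bar> ^ n / (m * fact n / 2 ^ n)"
      using m gamma_half_product_pos[of n] by (intro divide_left_mono bound) auto
    also have "\<dots> = \<bar>a\<bar> / m * (inverse (fact n) * (2 * \<bar>a\<bar> * \<bar>s\<bar>) ^ n)"
      by (simp add: field_simps)
    finally show "norm (flight_coeff a n * s ^ n) \<le> \<dots>" .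
  qed
qed

lemma flight_coeff_add2:
  "((real (k + 2))\<^sup>2 - 1) * flight_coeff a (k + 2) = 4 * a\<^sup>2 * flight_coeff a k"
proof -
  define P where "P = (real k + 1) * (real k + 3)"
  have "P > 0" by (simp add: P_def)
  have index: "(real (k + 2))\<^sup>2 - 1 = P"
    by (simp add: P_def power2_eq_square algebra_simps)
  have gamma: "gamma_half_product (k + 2) = P / 4 * gamma_half_product k"
    unfolding gamma_half_product_add2 P_def ..
  show ?thesis
    unfolding index flight_coeff_def gamma
    using \<open>P > 0\<close> gamma_half_product_pos[of k] by (simp add: field_simps power2_eq_square)
qed

lemma flight_coeff_0: "flight_coeff a 0 = 2 * a / pi"
  by (simp add: flight_coeff_def gamma_half_product_0)

lemma sums_of_nat_mult_power_series:
  fixes c :: "nat \<Rightarrow> 'a :: real_normed_field"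
  assumes "summable (\<lambda>n. diffs c n * s ^ n)"
  shows "(\<lambda>n. of_nat n * c n * s ^ n) sums (s * (\<Sum>n. diffs c n * s ^ n))"
proof -
  have "(\<lambda>n. s * (diffs c n * s ^ n)) sums (s * (\<Sum>n. diffs c n * s ^ n))"
    using assms by (intro sums_mult summable_sums)
  moreover have "(\<lambda>n. s * (diffs c n * s ^ n)) = (\<lambda>n. of_nat (n + 1) * c (n + 1) * s ^ (n + 1))"
    by (auto simp: diffs_def algebra_simps)
  ultimately show ?thesis
    by (subst sums_zero_iff_shift[of 1, symmetric]) simp_all
qed

lemma sums_falling_factorial_mult_power_series:
  fixes c :: "nat \<Rightarrow> 'a :: real_normed_field"
  assumes "summable (\<lambda>n. diffs (diffs c) n * s ^ n)"
  shows "(\<lambda>n. of_nat n * (of_nat n - 1) * c n * s ^ n) sums (s\<^sup>2 * (\<Sum>n. diffs (diffs c) n * s ^ n))"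
proof -
  have "(\<lambda>n. s * (of_nat n * diffs c n * s ^ n)) sums (s * (s * (\<Sum>n. diffs (diffs c) n * s ^ n)))"
    using sums_of_nat_mult_power_series[OF assms] by (rule sums_mult)
  moreover have "(\<lambda>n. s * (of_nat n * diffs c n * s ^ n))
      = (\<lambda>n. of_nat (n + 1) * (of_nat (n + 1) - 1) * c (n + 1) * s ^ (n + 1))"
    by (auto simp: diffs_def algebra_simps)
  ultimately show ?thesis
    by (subst sums_zero_iff_shift[of 1, symmetric]) (simp_all add: power2_eq_square mult.assoc)
qed

definition flight_series :: "real \<Rightarrow> real \<Rightarrow> real" where
  "flight_series a s = (\<Sum>n. flight_coeff a n * s ^ n)"

definition flight_series' :: "real \<Rightarrow> real \<Rightarrow> real" where
  "flight_series' a s = (\<Sum>n. diffs (flight_coeff a) n * s ^ n)"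

definition flight_series'' :: "real \<Rightarrow> real \<Rightarrow> real" where
  "flight_series'' a s = (\<Sum>n. diffs (diffs (flight_coeff a)) n * s ^ n)"

lemma summable_flight_coeff_diffs: "summable (\<lambda>n. diffs (flight_coeff a) n * s ^ n)"
  by (intro termdiff_converges_all summable_flight_coeff)

lemma summable_flight_coeff_diffs_diffs:
  "summable (\<lambda>n. diffs (diffs (flight_coeff a)) n * s ^ n)"
  by (intro termdiff_converges_all summable_flight_coeff_diffs)

lemma flight_series_has_derivative:
  "(flight_series a has_real_derivative flight_series' a s) (at s)"
  unfolding flight_series_def[abs_def] flight_series'_def
  by (intro termdiffs_strong_converges_everywhere summable_flight_coeff)

lemma flight_series'_has_derivative:
  "(flight_series' a has_real_derivative flight_series'' a s) (at s)"
  unfolding flight_series'_def[abs_def] flight_series''_def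
  by (intro termdiffs_strong_converges_everywhere summable_flight_coeff_diffs)

lemma flight_series_ode:
  "s\<^sup>2 * flight_series'' a s + s * flight_series' a s - (1 + 4 * a\<^sup>2 * s\<^sup>2) * flight_series a s
     = - (2 * a / pi)"
proof -
  define f where "f = (\<lambda>n. ((real n)\<^sup>2 - 1) * flight_coeff a n * s ^ n)"
  have "(\<lambda>n. real n * (real n - 1) * flight_coeff a n * s ^ n + real n * flight_coeff a n * s ^ n
              - flight_coeff a n * s ^ n)
        sums (s\<^sup>2 * flight_series'' a s + s * flight_series' a s - flight_series a s)"
    unfolding flight_series_def flight_series'_def flight_series''_def
    by (intro sums_add sums_diff summable_sums summable_flight_coeff
        sums_of_nat_mult_power_series sums_falling_factorial_mult_power_series
        summable_flight_coeff_diffs summable_flight_coeff_diffs_diffs)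
  then have "f sums (s\<^sup>2 * flight_series'' a s + s * flight_series' a s - flight_series a s)"
    by (simp add: f_def power2_eq_square algebra_simps)
  moreover have "(\<lambda>n. f (n + 2)) sums (4 * a\<^sup>2 * s\<^sup>2 * flight_series a s)"
  proof -
    have "(\<lambda>n. f (n + 2)) = (\<lambda>n. 4 * a\<^sup>2 * s\<^sup>2 * (flight_coeff a n * s ^ n))"
      unfolding f_def flight_coeff_add2 by (simp add: power_add power2_eq_square algebra_simps)
    then show ?thesis
      unfolding flight_series_def by (simp add: sums_mult summable_sums summable_flight_coeff)
  qed
  then have "f sums (4 * a\<^sup>2 * s\<^sup>2 * flight_series a s + (\<Sum>n<2. f n))"
    by (simp only: sums_iff_shift)
  moreover have "(\<Sum>n<2. f n) = - flight_coeff a 0"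
    by (simp add: f_def numeral_2_eq_2)
  ultimately show ?thesis
    by (auto dest: sums_unique2 simp: flight_coeff_0 algebra_simps)
qed

section \<open>The substitution \<open>q = s\<^sup>2\<close>\<close>

definition sqrt_quotient :: "(real \<Rightarrow> real) \<Rightarrow> real \<Rightarrow> real" where
  "sqrt_quotient G q = G (sqrt q) / sqrt q"

definition sqrt_quotient' :: "(real \<Rightarrow> real) \<Rightarrow> (real \<Rightarrow> real) \<Rightarrow> real \<Rightarrow> real" where
  "sqrt_quotient' G G' q = (sqrt q * G' (sqrt q) - G (sqrt q)) / (2 * sqrt q ^ 3)"

definition sqrt_quotient'' ::
    "(real \<Rightarrow> real) \<Rightarrow> (real \<Rightarrow> real) \<Rightarrow> (real \<Rightarrow> real) \<Rightarrow> real \<Rightarrow> real" where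
  "sqrt_quotient'' G G' G'' q =
     (sqrt q ^ 2 * G'' (sqrt q) - 3 * sqrt q * G' (sqrt q) + 3 * G (sqrt q)) / (4 * sqrt q ^ 5)"

lemma sqrt_quotient_has_derivative:
  assumes "q > 0" and "(G has_real_derivative G' (sqrt q)) (at (sqrt q))"
  shows "(sqrt_quotient G has_real_derivative sqrt_quotient' G G' q) (at q)"
proof -
  have sqrt: "(sqrt has_real_derivative inverse (sqrt q) / 2) (at q)"
    using assms(1) by (rule DERIV_real_sqrt)
  have "((\<lambda>q. G (sqrt q) / sqrt q) has_real_derivative
      (G' (sqrt q) * (inverse (sqrt q) / 2) * sqrt q - G (sqrt q) * (inverse (sqrt q) / 2))
        / (sqrt q * sqrt q)) (at q)"
    using assms(1) by (intro DERIV_divide DERIV_chain2[OF assms(2) sqrt] sqrt) simp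
  then show ?thesis
    unfolding sqrt_quotient_def[abs_def]
    by (rule DERIV_cong) (use assms(1) in \<open>simp add: sqrt_quotient'_def field_simps power3_eq_cube\<close>)
qed

lemma sqrt_quotient'_has_derivative:
  assumes "q > 0"
    and "(G has_real_derivative G' (sqrt q)) (at (sqrt q))"
    and "(G' has_real_derivative G'' (sqrt q)) (at (sqrt q))"
  shows "(sqrt_quotient' G G' has_real_derivative sqrt_quotient'' G G' G'' q) (at q)"
proof -
  have sqrt: "(sqrt has_real_derivative inverse (sqrt q) / 2) (at q)"
    using assms(1) by (rule DERIV_real_sqrt)
  have numerator: "((\<lambda>q. sqrt q * G' (sqrt q) - G (sqrt q)) has_real_derivative
      sqrt q * (G'' (sqrt q) * (inverse (sqrt q) / 2)) + inverse (sqrt q) / 2 * G' (sqrt q)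
        - G' (sqrt q) * (inverse (sqrt q) / 2)) (at q)"
    by (intro DERIV_diff DERIV_mult' sqrt DERIV_chain2[OF assms(2) sqrt]
        DERIV_chain2[OF assms(3) sqrt])
  have denominator: "((\<lambda>q. 2 * sqrt q ^ 3) has_real_derivative
      2 * (real 3 * (inverse (sqrt q) / 2 * sqrt q ^ (3 - Suc 0)))) (at q)"
    by (intro DERIV_cmult DERIV_power sqrt)
  have "2 * sqrt q ^ 3 \<noteq> 0" using assms(1) by simp
  from DERIV_divide[OF numerator denominator this] show ?thesis
    unfolding sqrt_quotient'_def[abs_def]
  proof (rule DERIV_cong)
    define s where "s = sqrt q"
    have "s > 0" using assms(1) by (simp add: s_def)
    then show "((s * (G'' s * (inverse s / 2)) + inverse s / 2 * G' s - G' s * (inverse s / 2))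
        * (2 * s ^ 3) - (s * G' s - G s) * (2 * (real 3 * (inverse s / 2 * s ^ (3 - Suc 0)))))
        / (2 * s ^ 3 * (2 * s ^ 3)) = sqrt_quotient'' G G' G'' q"
      by (simp add: sqrt_quotient''_def s_def[symmetric] field_simps eval_nat_numeral)
  qed
qed

lemma sqrt_quotient_ode:
  assumes "q > 0"
  defines "s \<equiv> sqrt q"
  shows "q * sqrt_quotient'' G G' G'' q + 2 * sqrt_quotient' G G' q - a\<^sup>2 * sqrt_quotient G q
    = (s\<^sup>2 * G'' s + s * G' s - (1 + 4 * a\<^sup>2 * s\<^sup>2) * G s) / (4 * s ^ 3)"
proof -
  have "s > 0" "q = s\<^sup>2" using assms by simp_all
  then show ?thesis
    unfolding sqrt_quotient_def sqrt_quotient'_def sqrt_quotient''_def s_def[symmetric]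
    by (simp add: field_simps eval_nat_numeral)
qed

section \<open>The time factor\<close>

definition recip_expm1 :: "real \<Rightarrow> real \<Rightarrow> real \<Rightarrow> real" where
  "recip_expm1 K lam t = K / (exp (lam * t) - 1)"

definition recip_expm1' :: "real \<Rightarrow> real \<Rightarrow> real \<Rightarrow> real" where
  "recip_expm1' K lam t = - K * lam * exp (lam * t) / (exp (lam * t) - 1)\<^sup>2"

definition recip_expm1'' :: "real \<Rightarrow> real \<Rightarrow> real \<Rightarrow> real" where
  "recip_expm1'' K lam t = K * lam\<^sup>2 * exp (lam * t) * (exp (lam * t) + 1) / (exp (lam * t) - 1) ^ 3"

lemma recip_expm1_has_derivative:
  assumes "exp (lam * t) \<noteq> 1"
  shows "(recip_expm1 K lam has_real_derivative recip_expm1' K lam t) (at t)"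
proof -
  define D where "D = exp (lam * t) - 1"
  have "D \<noteq> 0" "exp (lam * t) = D + 1" using assms by (simp_all add: D_def)
  then show ?thesis
    unfolding recip_expm1_def[abs_def] recip_expm1'_def
    by (auto intro!: derivative_eq_intros simp: field_simps power2_eq_square power3_eq_cube)
qed

lemma recip_expm1'_has_derivative:
  assumes "exp (lam * t) \<noteq> 1"
  shows "(recip_expm1' K lam has_real_derivative recip_expm1'' K lam t) (at t)"
proof -
  define D where "D = exp (lam * t) - 1"
  have "D \<noteq> 0" "exp (lam * t) = D + 1" using assms by (simp_all add: D_def)
  then show ?thesis
    unfolding recip_expm1'_def[abs_def] recip_expm1''_def
    by (auto intro!: derivative_eq_intros
        simp: field_simps power2_eq_square power3_eq_cube)
qed

lemma recip_expm1'_coef1: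
  assumes "exp (lam * t) \<noteq> 1"
  shows "2 * recip_expm1' K lam t + coef1 lam t * recip_expm1 K lam t = 0"
proof -
  define D where "D = exp (lam * t) - 1"
  have "D \<noteq> 0" "exp (lam * t) = D + 1" using assms by (simp_all add: D_def)
  then show ?thesis
    unfolding recip_expm1_def recip_expm1'_def coef1_def
    by (simp add: field_simps power2_eq_square power3_eq_cube)
qed

lemma recip_expm1''_coef1_coef2:
  assumes "exp (lam * t) \<noteq> 1"
  shows "recip_expm1'' K lam t + coef1 lam t * recip_expm1' K lam t + lam\<^sup>2 * recip_expm1 K lam t
    = coef2 lam t * recip_expm1 K lam t"
proof -
  define D where "D = exp (lam * t) - 1"
  have "D \<noteq> 0" "exp (lam * t) = D + 1" using assms by (simp_all add: D_def)
  then show ?thesis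
    unfolding recip_expm1_def recip_expm1'_def recip_expm1''_def coef1_def coef2_def
    by (simp add: field_simps power2_eq_square power3_eq_cube)
qed

section \<open>Functions separable in time and spacetime interval\<close>

definition spacetime_interval :: "real \<Rightarrow> 'a :: real_normed_vector \<Rightarrow> real \<Rightarrow> real" where
  "spacetime_interval c y t = c\<^sup>2 * t\<^sup>2 - (norm y)\<^sup>2"

lemma spacetime_interval_pos: "norm y < c * t \<Longrightarrow> spacetime_interval c y t > 0"
proof -
  assume "norm y < c * t"
  then have "(norm y)\<^sup>2 < (c * t)\<^sup>2" by (intro power_strict_mono) auto
  then show ?thesis by (simp add: spacetime_interval_def power_mult_distrib)
qed

lemma spacetime_interval_has_derivative_time:
  "((\<lambda>s. spacetime_interval c y s) has_real_derivative 2 * c\<^sup>2 * t) (at t)"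
  unfolding spacetime_interval_def by (auto intro!: derivative_eq_intros)

lemma norm_add_axis_power2:
  "(norm (y + s *\<^sub>R axis j 1))\<^sup>2 = (norm (y :: real ^ 'n))\<^sup>2 + 2 * s * y $ j + s\<^sup>2"
  unfolding power2_norm_eq_inner
  by (simp add: inner_axis inner_commute algebra_simps power2_eq_square)

lemma spacetime_interval_has_derivative_axis:
  "((\<lambda>s. spacetime_interval c (y + s *\<^sub>R axis j 1) t) has_real_derivative - 2 * (y :: real ^ 'n) $ j)
     (at 0)"
  unfolding spacetime_interval_def norm_add_axis_power2 by (auto intro!: derivative_eq_intros)

lemma sum_power2_vec_nth: "(\<Sum>j\<in>UNIV. (y $ j)\<^sup>2) = (norm (y :: real ^ 'n))\<^sup>2"
  unfolding power2_norm_eq_inner inner_vec_def by (simp add: power2_eq_square)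

locale cone_separable =
  fixes c :: real and u :: "real ^ 3 \<Rightarrow> real \<Rightarrow> real"
    and g g' g'' F F' F'' :: "real \<Rightarrow> real"
  assumes g_has_derivative: "t > 0 \<Longrightarrow> (g has_real_derivative g' t) (at t)"
    and g'_has_derivative: "t > 0 \<Longrightarrow> (g' has_real_derivative g'' t) (at t)"
    and F_has_derivative: "q > 0 \<Longrightarrow> (F has_real_derivative F' q) (at q)"
    and F'_has_derivative: "q > 0 \<Longrightarrow> (F' has_real_derivative F'' q) (at q)"
    and u_eq: "t > 0 \<Longrightarrow> norm y < c * t \<Longrightarrow> u y t = g t * F (spacetime_interval c y t)"
begin

abbreviation Q :: "real ^ 3 \<Rightarrow> real \<Rightarrow> real" where
  "Q \<equiv> spacetime_interval c"

lemma open_cone_time: "open {s. 0 < s \<and> norm y < c * s}"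
  by (intro open_Collect_conj open_Collect_less continuous_intros)

lemma open_cone_axis: "open {s. norm (y + s *\<^sub>R axis j 1) < c * t}"
  by (intro open_Collect_less continuous_intros)

lemma has_derivative_time:
  assumes "t > 0" "norm y < c * t"
  shows "((\<lambda>s. u y s) has_real_derivative g' t * F (Q y t) + 2 * c\<^sup>2 * t * g t * F' (Q y t)) (at t)"
proof -
  have "((\<lambda>s. g s * F (Q y s)) has_real_derivative
      g t * (F' (Q y t) * (2 * c\<^sup>2 * t)) + g' t * F (Q y t)) (at t)"
    using assms spacetime_interval_pos
    by (intro DERIV_mult' g_has_derivative DERIV_chain2[OF F_has_derivative]
        spacetime_interval_has_derivative_time)
  then have "((\<lambda>s. g s * F (Q y s)) has_real_derivative
      g' t * F (Q y t) + 2 * c\<^sup>2 * t * g t * F' (Q y t)) (at t)"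
    by (simp add: algebra_simps)
  then show ?thesis
    by (rule has_field_derivative_transform_within_open[OF _ open_cone_time])
       (use assms u_eq in auto)
qed

lemma dt_eq:
  "t > 0 \<Longrightarrow> norm y < c * t \<Longrightarrow> dt u y t = g' t * F (Q y t) + 2 * c\<^sup>2 * t * g t * F' (Q y t)"
  unfolding dt_def by (intro DERIV_imp_deriv has_derivative_time)

lemma has_derivative_dt:
  assumes "t > 0" "norm y < c * t"
  shows "((\<lambda>s. dt u y s) has_real_derivative
      g'' t * F (Q y t) + 4 * c\<^sup>2 * t * g' t * F' (Q y t)
      + 2 * c\<^sup>2 * g t * (F' (Q y t) + 2 * c\<^sup>2 * t\<^sup>2 * F'' (Q y t))) (at t)"
proof -
  have "Q y t > 0" using assms spacetime_interval_pos by blast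
  have "((\<lambda>s. g' s * F (Q y s) + 2 * c\<^sup>2 * s * g s * F' (Q y s)) has_real_derivative
      g' t * (F' (Q y t) * (2 * c\<^sup>2 * t)) + g'' t * F (Q y t)
      + (2 * c\<^sup>2 * t * g t * (F'' (Q y t) * (2 * c\<^sup>2 * t))
         + (2 * c\<^sup>2 * t * g' t + 2 * c\<^sup>2 * 1 * g t) * F' (Q y t))) (at t)"
    using assms \<open>Q y t > 0\<close>
    by (intro DERIV_add DERIV_mult' DERIV_cmult DERIV_ident g_has_derivative g'_has_derivative
        DERIV_chain2[OF F_has_derivative] DERIV_chain2[OF F'_has_derivative]
        spacetime_interval_has_derivative_time)
  then have "((\<lambda>s. g' s * F (Q y s) + 2 * c\<^sup>2 * s * g s * F' (Q y s)) has_real_derivative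
      g'' t * F (Q y t) + 4 * c\<^sup>2 * t * g' t * F' (Q y t)
      + 2 * c\<^sup>2 * g t * (F' (Q y t) + 2 * c\<^sup>2 * t\<^sup>2 * F'' (Q y t))) (at t)"
    by (simp add: algebra_simps power2_eq_square)
  then show ?thesis
    by (rule has_field_derivative_transform_within_open[OF _ open_cone_time])
       (use assms dt_eq in auto)
qed

lemma has_derivative_axis:
  assumes "t > 0" "norm y < c * t"
  shows "((\<lambda>s. u (y + s *\<^sub>R axis j 1) t) has_real_derivative - 2 * y $ j * g t * F' (Q y t)) (at 0)"
proof -
  have "((\<lambda>s. g t * F (Q (y + s *\<^sub>R axis j 1) t)) has_real_derivative
      g t * (F' (Q (y + 0 *\<^sub>R axis j 1) t) * (- 2 * y $ j))) (at 0)"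
    using assms spacetime_interval_pos
    by (intro DERIV_cmult DERIV_chain2[OF F_has_derivative] spacetime_interval_has_derivative_axis)
       simp
  then have "((\<lambda>s. g t * F (Q (y + s *\<^sub>R axis j 1) t)) has_real_derivative
      - 2 * y $ j * g t * F' (Q y t)) (at 0)"
    by (simp add: algebra_simps)
  then show ?thesis
    by (rule has_field_derivative_transform_within_open[OF _ open_cone_axis[of y j t]])
       (use assms u_eq in auto)
qed

lemma dy_eq:
  "t > 0 \<Longrightarrow> norm y < c * t \<Longrightarrow> dy j u y t = - 2 * y $ j * g t * F' (Q y t)"
  unfolding dy_def by (intro DERIV_imp_deriv has_derivative_axis)

lemma has_derivative_dy:
  assumes "t > 0" "norm y < c * t"
  shows "((\<lambda>s. dy j u (y + s *\<^sub>R axis j 1) t) has_real_derivative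
      g t * (4 * (y $ j)\<^sup>2 * F'' (Q y t) - 2 * F' (Q y t))) (at 0)"
proof -
  have "Q y t > 0" using assms spacetime_interval_pos by blast
  have "((\<lambda>s. - 2 * g t * ((y $ j + s) * F' (Q (y + s *\<^sub>R axis j 1) t))) has_real_derivative
      - 2 * g t * ((y $ j + 0) * (F'' (Q (y + 0 *\<^sub>R axis j 1) t) * (- 2 * y $ j))
        + (0 + 1) * F' (Q (y + 0 *\<^sub>R axis j 1) t))) (at 0)"
    using \<open>Q y t > 0\<close>
    by (intro DERIV_cmult DERIV_mult' DERIV_add DERIV_const DERIV_ident
        DERIV_chain2[OF F'_has_derivative] spacetime_interval_has_derivative_axis) simp
  then have "((\<lambda>s. - 2 * g t * ((y $ j + s) * F' (Q (y + s *\<^sub>R axis j 1) t))) has_real_derivative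
      g t * (4 * (y $ j)\<^sup>2 * F'' (Q y t) - 2 * F' (Q y t))) (at 0)"
    by (simp add: algebra_simps power2_eq_square)
  then show ?thesis
    by (rule has_field_derivative_transform_within_open[OF _ open_cone_axis[of y j t]])
       (use assms dy_eq in \<open>auto simp: axis_def algebra_simps\<close>)
qed

lemma laplacian_eq:
  assumes "t > 0" "norm y < c * t"
  shows "laplacian u y t = g t * (4 * (norm y)\<^sup>2 * F'' (Q y t) - 6 * F' (Q y t))"
proof -
  have "dy j (dy j u) y t = g t * (4 * (y $ j)\<^sup>2 * F'' (Q y t) - 2 * F' (Q y t))" for j
    unfolding dy_def[of j "dy j u"] using assms by (intro DERIV_imp_deriv has_derivative_dy)
  then have "laplacian u y t = (\<Sum>j\<in>UNIV. g t * (4 * (y $ j)\<^sup>2 * F'' (Q y t) - 2 * F' (Q y t)))"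
    by (simp add: laplacian_def)
  also have "\<dots> = g t * (4 * (norm y)\<^sup>2 * F'' (Q y t) - 6 * F' (Q y t))"
    by (simp add: sum_subtractf sum_distrib_left[symmetric] sum_distrib_right[symmetric]
        sum_power2_vec_nth algebra_simps)
  finally show ?thesis .
qed

lemma telegraph_operator_eq:
  assumes "t > 0" "norm y < c * t"
  shows "dt (dt u) y t + k * dt u y t - c\<^sup>2 * laplacian u y t
    = (g'' t + k * g' t) * F (Q y t) + 2 * c\<^sup>2 * t * (2 * g' t + k * g t) * F' (Q y t)
      + 4 * c\<^sup>2 * g t * (Q y t * F'' (Q y t) + 2 * F' (Q y t))"
proof -
  have "dt (dt u) y t = g'' t * F (Q y t) + 4 * c\<^sup>2 * t * g' t * F' (Q y t)
      + 2 * c\<^sup>2 * g t * (F' (Q y t) + 2 * c\<^sup>2 * t\<^sup>2 * F'' (Q y t))"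
    unfolding dt_def[of "dt u"] using assms by (intro DERIV_imp_deriv has_derivative_dt)
  then show ?thesis
    using assms
    by (simp add: dt_eq laplacian_eq spacetime_interval_def algebra_simps power2_eq_square)
qed

lemma telegraph_equation_of_odes:
  assumes "t > 0" "norm y < c * t"
    and time: "2 * g' t + k * g t = 0" "g'' t + k * g' t + lam\<^sup>2 * g t = m * g t"
    and radial: "Q y t * F'' (Q y t) + 2 * F' (Q y t) - a\<^sup>2 * F (Q y t) = f"
    and "4 * c\<^sup>2 * a\<^sup>2 = lam\<^sup>2"
  shows "dt (dt u) y t + k * dt u y t - c\<^sup>2 * laplacian u y t = m * u y t + 4 * c\<^sup>2 * g t * f"
proof -
  have time': "g'' t + k * g' t = m * g t - lam\<^sup>2 * g t" using time(2) by simp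
  have radial': "Q y t * F'' (Q y t) + 2 * F' (Q y t) = a\<^sup>2 * F (Q y t) + f" using radial by simp
  have "dt (dt u) y t + k * dt u y t - c\<^sup>2 * laplacian u y t
      = (m * g t - lam\<^sup>2 * g t) * F (Q y t) + 4 * c\<^sup>2 * g t * (a\<^sup>2 * F (Q y t) + f)"
    unfolding telegraph_operator_eq[OF assms(1,2)] time(1) time' radial' by simp
  also have "\<dots> = m * (g t * F (Q y t)) + (4 * c\<^sup>2 * a\<^sup>2 - lam\<^sup>2) * g t * F (Q y t) + 4 * c\<^sup>2 * g t * f"
    by (simp add: algebra_simps)
  finally show ?thesis using assms(1,2,6) by (simp add: u_eq)
qed

end

section \<open>The flight density\<close>

lemma flight_profile_ode:
  assumes "q > 0"
  shows "q * sqrt_quotient'' (flight_series a) (flight_series' a) (flight_series'' a) q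
      + 2 * sqrt_quotient' (flight_series a) (flight_series' a) q
      - a\<^sup>2 * sqrt_quotient (flight_series a) q = - (a / (2 * pi)) / sqrt q ^ 3"
  unfolding sqrt_quotient_ode[OF assms] flight_series_ode using assms by simp

lemma flight_density_eq:
  assumes "norm y < c * t"
  shows "flight_density c lam y t
    = recip_expm1 (lam / (2 * c) / pi) lam t
      * sqrt_quotient (flight_series (lam / (2 * c))) (spacetime_interval c y t)"
proof -
  define a where "a = lam / (2 * c)"
  define s where "s = sqrt (spacetime_interval c y t)"
  have "s > 0" using spacetime_interval_pos[OF assms] by (simp add: s_def)
  then have "a ^ (k + 1) * s powr (real k - 1)
        / (Gamma ((real k + 1) / 2) * Gamma ((real k + 3) / 2))
      = flight_coeff a k * s ^ k / s" for k
    by (simp add: powr_diff powr_realpow flight_coeff_def gamma_half_product_def)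
  then have "(\<Sum>k. a ^ (k + 1) * s powr (real k - 1)
        / (Gamma ((real k + 1) / 2) * Gamma ((real k + 3) / 2)))
      = flight_series a s / s"
    unfolding flight_series_def by (simp add: suminf_divide summable_flight_coeff)
  then show ?thesis
    unfolding flight_density_def recip_expm1_def sqrt_quotient_def spacetime_interval_def
      a_def[symmetric] s_def[symmetric]
    by (simp add: spacetime_interval_def s_def)
qed

lemma cone_separable_flight_density:
  assumes "lam > 0"
  shows "cone_separable c (flight_density c lam)
    (recip_expm1 (lam / (2 * c) / pi) lam) (recip_expm1' (lam / (2 * c) / pi) lam)
      (recip_expm1'' (lam / (2 * c) / pi) lam)
    (sqrt_quotient (flight_series (lam / (2 * c))))
      (sqrt_quotient' (flight_series (lam / (2 * c))) (flight_series' (lam / (2 * c))))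
      (sqrt_quotient'' (flight_series (lam / (2 * c))) (flight_series' (lam / (2 * c)))
        (flight_series'' (lam / (2 * c))))"
proof
  fix t :: real assume "t > 0"
  then have "exp (lam * t) \<noteq> 1" using assms by simp
  then show "(recip_expm1 (lam / (2 * c) / pi) lam has_real_derivative
        recip_expm1' (lam / (2 * c) / pi) lam t) (at t)"
    and "(recip_expm1' (lam / (2 * c) / pi) lam has_real_derivative
        recip_expm1'' (lam / (2 * c) / pi) lam t) (at t)"
    by (simp_all add: recip_expm1_has_derivative recip_expm1'_has_derivative)
qed (simp_all add: flight_density_eq sqrt_quotient_has_derivative sqrt_quotient'_has_derivative
      flight_series_has_derivative flight_series'_has_derivative)

lemma Gamma_minus_one_half: "Gamma (- 1 / 2 :: real) = - 2 * sqrt pi"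
proof -
  have "(- 1 / 2 :: real) \<notin> \<int>\<^sub>\<le>\<^sub>0"
  proof
    assume "(- 1 / 2 :: real) \<in> \<int>\<^sub>\<le>\<^sub>0"
    then obtain n :: int where "- 1 / 2 = real_of_int n" by (auto elim!: nonpos_Ints_cases)
    then have "real_of_int (2 * n) = - 1" by simp
    then have "2 * n = - 1" by linarith
    then show False by presburger
  qed
  then have "Gamma (- 1 / 2 + 1 :: real) = - 1 / 2 * Gamma (- 1 / 2)" by (rule Gamma_plus1)
  then show ?thesis by (simp add: Gamma_one_half_real)
qed

lemma powr_minus_three_halves: "q > 0 \<Longrightarrow> q powr (- 3 / 2) = 1 / sqrt q ^ 3"
proof -
  assume "q > 0"
  have "q powr (3 / 2) = (q powr (1 / 2)) powr 3" by (simp add: powr_powr)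
  also have "\<dots> = sqrt q ^ 3" using \<open>q > 0\<close> by (simp add: powr_half_sqrt)
  finally show ?thesis using powr_minus_divide[of q "3 / 2"] by simp
qed

lemma coef3_eq:
  assumes "norm y < c * t"
  shows "coef3 c lam y t
    = - lam\<^sup>2 / (2 * pi\<^sup>2) / (exp (lam * t) - 1) / sqrt (spacetime_interval c y t) ^ 3"
proof -
  define r where "r = sqrt pi"
  have pi: "pi = r\<^sup>2" and "r > 0" by (simp_all add: r_def)
  have sqrt_pi_cube: "sqrt (pi ^ 3) = r ^ 3" by (simp add: r_def real_sqrt_power)
  show ?thesis
    using powr_minus_three_halves[OF spacetime_interval_pos[OF assms]] \<open>r > 0\<close>
    unfolding coef3_def Gamma_minus_one_half sqrt_pi_cube r_def[symmetric]
    unfolding pi by (simp add: spacetime_interval_def field_simps eval_nat_numeral)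
qed

lemma flight_density_telegraph_equation:
  assumes "c > 0" and "lam > 0" and t: "t > 0" and y: "norm y < c * t"
  defines "u \<equiv> flight_density c lam"
  shows "dt (dt u) y t + coef1 lam t * dt u y t - c\<^sup>2 * laplacian u y t
    = coef2 lam t * u y t + coef3 c lam y t"
proof -
  define a where "a = lam / (2 * c)"
  define g where "g = recip_expm1 (a / pi) lam"
  interpret cone_separable c u g "recip_expm1' (a / pi) lam" "recip_expm1'' (a / pi) lam"
      "sqrt_quotient (flight_series a)" "sqrt_quotient' (flight_series a) (flight_series' a)"
      "sqrt_quotient'' (flight_series a) (flight_series' a) (flight_series'' a)"
    unfolding u_def a_def g_def using assms(2) by (rule cone_separable_flight_density)
  have "exp (lam * t) \<noteq> 1" using assms(2) t by simp
  have "Q y t > 0" using y by (rule spacetime_interval_pos)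
  have a: "4 * c\<^sup>2 * a\<^sup>2 = lam\<^sup>2" using assms(1) by (simp add: a_def power2_eq_square)
  have time1: "2 * recip_expm1' (a / pi) lam t + coef1 lam t * g t = 0"
    unfolding g_def using \<open>exp (lam * t) \<noteq> 1\<close> by (rule recip_expm1'_coef1)
  have time2: "recip_expm1'' (a / pi) lam t + coef1 lam t * recip_expm1' (a / pi) lam t
      + lam\<^sup>2 * g t = coef2 lam t * g t"
    unfolding g_def using \<open>exp (lam * t) \<noteq> 1\<close> by (rule recip_expm1''_coef1_coef2)
  have "dt (dt u) y t + coef1 lam t * dt u y t - c\<^sup>2 * laplacian u y t
      = coef2 lam t * u y t + 4 * c\<^sup>2 * g t * (- (a / (2 * pi)) / sqrt (Q y t) ^ 3)"
    by (rule telegraph_equation_of_odes[OF t y time1 time2 flight_profile_ode[OF \<open>Q y t > 0\<close>] a])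
  also have "4 * c\<^sup>2 * g t * (- (a / (2 * pi)) / sqrt (Q y t) ^ 3) = coef3 c lam y t"
  proof -
    define D where "D = exp (lam * t) - 1"
    have "D \<noteq> 0" using \<open>exp (lam * t) \<noteq> 1\<close> by (simp add: D_def)
    then show ?thesis
      unfolding coef3_eq[OF y] g_def recip_expm1_def D_def[symmetric]
      using assms(1) \<open>Q y t > 0\<close> by (simp add: a_def field_simps power2_eq_square)
  qed
  finally show ?thesis .
qed

theorem theorem3p5:
  fixes c lam :: real
  assumes "c > 0" and "lam > 0"
  defines "u \<equiv> flight_density c lam"
  shows "\<forall>y t. t > 0 \<and> norm y < c * t \<longrightarrow>
           (\<lambda>s. u y s) differentiable (at t) \<and>
           (\<lambda>s. dt u y s) differentiable (at t) \<and>
           (\<forall>j. (\<lambda>s. u (y + s *\<^sub>R axis j 1) t) differentiable (at 0) \<and>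
                (\<lambda>s. dy j u (y + s *\<^sub>R axis j 1) t) differentiable (at 0)) \<and>
           dt (dt u) y t + coef1 lam t * dt u y t - c\<^sup>2 * laplacian u y t
             = coef2 lam t * u y t + coef3 c lam y t"
proof -
  note separable = cone_separable_flight_density[OF assms(2), of c]
  show ?thesis
    unfolding u_def real_differentiable_def
    using cone_separable.has_derivative_time[OF separable]
      cone_separable.has_derivative_dt[OF separable]
      cone_separable.has_derivative_axis[OF separable]
      cone_separable.has_derivative_dy[OF separable]
      flight_density_telegraph_equation[OF assms(1,2)]
    by blast
qed

end
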